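(* Over a field of characteristic $0$, write $[a,b]=ab-ba$ and $\{a,b\}=ab+ba$ (so $ab=\tfrac12([a,b]+\{a,b\})$). An algebra is left-symmetric if and only if, in terms of the anticommutative operation $[\cdot,\cdot]$ and the commutative operation $\{\cdot,\cdot\}$, it satisfies \[ [[a,b],c]+[[b,c],a]+[[c,a],b]=0 \] and \[ \{\{a,b\},c\}=-\{[a,b],c\}-2\{[a,c],b\}+[\{a,b\},c]-[[a,c],b]+\{a,\{b,c\}\}-\{a,[b,c]\}+[a,\{b,c\}]. \]
   Context: A left-symmetric algebra is an algebra whose associator $(a,b,c)=(ab)c-a(bc)$ satisfies $(a,b,c)=(b,a,c)$. The statement is the polarization (in the sense of Markl–Remm) of the left-symmetric operad: the defining identities rewritten in the two operations $[\cdot,\cdot]$, $\{\cdot,\cdot\}$. *)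

theory Defs
  imports Complex_Main
begin

definition bilinear_product ::
  "('k::field \<Rightarrow> 'v::ab_group_add \<Rightarrow> 'v) \<Rightarrow> ('v \<Rightarrow> 'v \<Rightarrow> 'v) \<Rightarrow> bool" where
  "bilinear_product scale m \<longleftrightarrow>
     (\<forall>x. Vector_Spaces.linear scale scale (m x)) \<and>
     (\<forall>y. Vector_Spaces.linear scale scale (\<lambda>x. m x y))"

definition associator :: "('v \<Rightarrow> 'v \<Rightarrow> 'v) \<Rightarrow> 'v \<Rightarrow> 'v \<Rightarrow> 'v \<Rightarrow> 'v::ab_group_add" where
  "associator m a b c = m (m a b) c - m a (m b c)"

definition left_symmetric :: "('v \<Rightarrow> 'v \<Rightarrow> 'v::ab_group_add) \<Rightarrow> bool" where
  "left_symmetric m \<longleftrightarrow> (\<forall>a b c. associator m a b c = associator m b a c)"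

definition commutator :: "('v \<Rightarrow> 'v \<Rightarrow> 'v::ab_group_add) \<Rightarrow> 'v \<Rightarrow> 'v \<Rightarrow> 'v" where
  "commutator m a b = m a b - m b a"

definition anticommutator :: "('v \<Rightarrow> 'v \<Rightarrow> 'v::ab_group_add) \<Rightarrow> 'v \<Rightarrow> 'v \<Rightarrow> 'v" where
  "anticommutator m a b = m a b + m b a"

end

(* Let D(a,b,c) = (a,b,c) - (b,a,c) measure the failure of left-symmetry; it is antisymmetric
   in a and b. Expanding [,] and {,} by bilinearity, the Jacobiator of [,] is
   D(a,b,c) - D(a,c,b) + D(b,c,a), and the difference of the two sides of the second identity
   is D(a,b,c) + 3 D(a,c,b) + D(b,c,a). So both identities hold when D = 0; conversely the
   Jacobiator at (a,b,c) plus the second difference at (a,c,b) is 4 D(a,b,c), and 4 is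
   invertible in characteristic 0. *)
theory Submission
  imports Defs
begin

lemma bilinear_product_distrib:
  assumes "bilinear_product scale m"
  shows "m (x + y) z = m x z + m y z" and "m x (y + z) = m x y + m x z"
    and "m (x - y) z = m x z - m y z" and "m x (y - z) = m x y - m x z"
proof -
  from assms have left: "module_hom scale scale (\<lambda>x. m x z)"
    and right: "module_hom scale scale (m x)"
    by (simp_all add: bilinear_product_def linear_iff_module_hom)
  show "m (x + y) z = m x z + m y z" and "m (x - y) z = m x z - m y z"
    using module_hom.add[OF left, of x y] module_hom.diff[OF left, of x y] by simp_all
  show "m x (y + z) = m x y + m x z" and "m x (y - z) = m x y - m x z"
    using module_hom.add[OF right] module_hom.diff[OF right] by simp_all
qed

definition left_symmetric_defect :: "('v \<Rightarrow> 'v \<Rightarrow> 'v::ab_group_add) \<Rightarrow> 'v \<Rightarrow> 'v \<Rightarrow> 'v \<Rightarrow> 'v" where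
  "left_symmetric_defect m a b c = associator m a b c - associator m b a c"

definition jacobiator :: "('v \<Rightarrow> 'v \<Rightarrow> 'v::ab_group_add) \<Rightarrow> 'v \<Rightarrow> 'v \<Rightarrow> 'v \<Rightarrow> 'v" where
  "jacobiator L a b c = L (L a b) c + L (L b c) a + L (L c a) b"

definition polarized_defect ::
  "('k::field \<Rightarrow> 'v::ab_group_add \<Rightarrow> 'v) \<Rightarrow> ('v \<Rightarrow> 'v \<Rightarrow> 'v) \<Rightarrow> 'v \<Rightarrow> 'v \<Rightarrow> 'v \<Rightarrow> 'v" where
  "polarized_defect scale m a b c =
     (let L = commutator m; J = anticommutator m in
      J (J a b) c -
      (- J (L a b) c - scale 2 (J (L a c) b) + L (J a b) c - L (L a c) b
       + J a (J b c) - J a (L b c) + L a (J b c)))"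

lemma left_symmetric_iff_defect_eq_0:
  "left_symmetric m \<longleftrightarrow> (\<forall>a b c. left_symmetric_defect m a b c = 0)"
  by (simp add: left_symmetric_def left_symmetric_defect_def)

lemma left_symmetric_defect_swap:
  "left_symmetric_defect m b a c = - left_symmetric_defect m a b c"
  by (simp add: left_symmetric_defect_def)

lemma jacobiator_commutator_eq_defects:
  assumes "bilinear_product scale m"
  shows "jacobiator (commutator m) a b c =
    left_symmetric_defect m a b c - left_symmetric_defect m a c b + left_symmetric_defect m b c a"
  by (simp add: jacobiator_def left_symmetric_defect_def associator_def commutator_def
      bilinear_product_distrib[OF assms] algebra_simps)

lemma polarized_defect_eq_defects:
  assumes "vector_space scale" and "bilinear_product scale m"
  shows "polarized_defect scale m a b c =
    left_symmetric_defect m a b c + scale 3 (left_symmetric_defect m a c b)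
    + left_symmetric_defect m b c a"
proof -
  interpret vector_space scale by fact
  have scale_2: "scale 2 x = x + x" and scale_3: "scale 3 x = x + x + x" for x
    using scale_left_distrib[of 1 1 x] scale_left_distrib[of 2 1 x] by simp_all
  show ?thesis
    by (simp add: polarized_defect_def left_symmetric_defect_def associator_def commutator_def
      anticommutator_def bilinear_product_distrib[OF assms(2)] algebra_simps scale_2 scale_3)
qed

lemma scale_4_left_symmetric_defect:
  assumes "vector_space scale" and "bilinear_product scale m"
  shows "scale 4 (left_symmetric_defect m a b c) =
    jacobiator (commutator m) a b c + polarized_defect scale m a c b"
proof -
  interpret vector_space scale by fact
  have "scale 4 x = x + scale 3 x" for x
    using scale_left_distrib[of 1 3 x] by simp
  then show ?thesis
    by (simp add: jacobiator_commutator_eq_defects[OF assms(2)]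
        polarized_defect_eq_defects[OF assms]
        left_symmetric_defect_swap[of m c b a])
qed

theorem mainTheorem12:
  fixes scale :: "'k::field_char_0 \<Rightarrow> 'v::ab_group_add \<Rightarrow> 'v"
    and m :: "'v \<Rightarrow> 'v \<Rightarrow> 'v"
  assumes "vector_space scale"
    and "bilinear_product scale m"
  defines "L \<equiv> commutator m" and "J \<equiv> anticommutator m"
  shows "left_symmetric m \<longleftrightarrow>
    ((\<forall>a b c. L (L a b) c + L (L b c) a + L (L c a) b = 0) \<and>
     (\<forall>a b c. J (J a b) c =
        - J (L a b) c - scale 2 (J (L a c) b) + L (J a b) c - L (L a c) b
        + J a (J b c) - J a (L b c) + L a (J b c)))"
proof -
  interpret vector_space scale by fact
  have jacobi: "(\<forall>a b c. L (L a b) c + L (L b c) a + L (L c a) b = 0) \<longleftrightarrow>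
      (\<forall>a b c. jacobiator (commutator m) a b c = 0)"
    by (simp add: L_def jacobiator_def)
  have polarized: "(\<forall>a b c. J (J a b) c =
        - J (L a b) c - scale 2 (J (L a c) b) + L (J a b) c - L (L a c) b
        + J a (J b c) - J a (L b c) + L a (J b c)) \<longleftrightarrow>
      (\<forall>a b c. polarized_defect scale m a b c = 0)"
    by (simp add: L_def J_def polarized_defect_def Let_def)
  show ?thesis
    unfolding jacobi polarized left_symmetric_iff_defect_eq_0
  proof (intro iffI conjI allI)
    fix a b c
    assume "\<forall>a b c. left_symmetric_defect m a b c = 0"
    then show "jacobiator (commutator m) a b c = 0" and "polarized_defect scale m a b c = 0"
      by (simp_all add: jacobiator_commutator_eq_defects[OF assms(2)]
          polarized_defect_eq_defects[OF assms(1,2)])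
  next
    fix a b c
    assume "(\<forall>a b c. jacobiator (commutator m) a b c = 0) \<and>
      (\<forall>a b c. polarized_defect scale m a b c = 0)"
    then have "scale 4 (left_symmetric_defect m a b c) = 0"
      by (simp add: scale_4_left_symmetric_defect[OF assms(1,2)])
    then show "left_symmetric_defect m a b c = 0"
      by simp
  qed
qed

end
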